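(* Let $g$ be a positive integer, let $l\ge1$, and let $(a,a+g)$ be a consecutive prospective prime pair with gap $g$ in $S_l$. For $k>l+2$ and $0\le m\le P_k-1$ let $\mathring{n}^g_{S_k^{(m)}}$ be the number of tuples $(m_{l+1},\dots,m_k)$ with $0\le m_j\le P_j-1$ and $m_k=m$ such that, with $M=\sum_{j=l+1}^km_jP_{j-1}\#$, both $a+M$ and $a+g+M$ are coprime to $P_k\#$. Then for all sufficiently large $P_k$ and every $0\le m\le P_k-1$, \[\mathring{n}^g_{S_k^{(m)}}\ge\mathring{n}^g_{k-1}-2\,\mathring{n}^g_{k-2}.\]
   Context: $P_k$ denotes the $k$-th prime ($P_1=2$), $P_k\#=\prod_{i=1}^kP_i$. $S_k=\{N\in\mathbb{N}:5\le N\le4+P_k\#\}$, $S_k^{(m)}=\{N:5+mP_{k-1}\#\le N\le4+(m+1)P_{k-1}\#\}$. A prospective prime in $S_k$ is an $N\in S_k$ coprime to $P_k\#$; prospective primes $a<b$ in $S_k$ are consecutive if no integer strictly between them is coprime to $P_k\#$; a consecutive prospective prime pair with gap $g$ is a pair $(a,a+g)$ of consecutive prospective primes. For $j>l$, $\mathring{n}^g_j=\prod_{i=l+1}^{j}(P_i-2)\prod_{l+1\le i\le j,\,P_i\mid g}\frac{P_i-1}{P_i-2}$. *)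

theory Defs
  imports "HOL-Analysis.Analysis" "HOL-Computational_Algebra.Primes"
begin

text \<open>P k is the k-th prime, P 1 = 2 (P 0 is a junk value).\<close>
definition P :: "nat \<Rightarrow> nat" where
  "P k = enumerate {p::nat. prime p} (k - 1)"

definition primorial :: "nat \<Rightarrow> nat" where
  "primorial k = (\<Prod>i\<in>{1..k}. P i)"

definition S :: "nat \<Rightarrow> nat set" where
  "S k = {N. 5 \<le> N \<and> N \<le> 4 + primorial k}"

definition prospective_prime :: "nat \<Rightarrow> nat \<Rightarrow> bool" where
  "prospective_prime k N \<longleftrightarrow> N \<in> S k \<and> coprime N (primorial k)"

definition consecutive_pp :: "nat \<Rightarrow> nat \<Rightarrow> nat \<Rightarrow> bool" where
  "consecutive_pp k a b \<longleftrightarrow> prospective_prime k a \<and> prospective_prime k b \<and> a < b \<and>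
     (\<forall>N. a < N \<and> N < b \<longrightarrow> \<not> coprime N (primorial k))"

definition cpp_pair :: "nat \<Rightarrow> nat \<Rightarrow> nat \<Rightarrow> bool" where
  "cpp_pair k g a \<longleftrightarrow> consecutive_pp k a (a + g)"

definition ring_n :: "nat \<Rightarrow> nat \<Rightarrow> nat \<Rightarrow> real" where
  "ring_n l g j = (\<Prod>i\<in>{l+1..j}. real (P i) - 2) *
                  (\<Prod>i\<in>{i. l+1 \<le> i \<and> i \<le> j \<and> P i dvd g}. (real (P i) - 1) / (real (P i) - 2))"

definition shiftM :: "nat \<Rightarrow> nat \<Rightarrow> (nat \<Rightarrow> nat) \<Rightarrow> nat" where
  "shiftM l k ms = (\<Sum>j\<in>{l+1..k}. ms j * primorial (j - 1))"

definition ring_n_S :: "nat \<Rightarrow> nat \<Rightarrow> nat \<Rightarrow> nat \<Rightarrow> nat \<Rightarrow> nat" where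
  "ring_n_S l g a k m = card {ms \<in> Pi\<^sub>E {l+1..k} (\<lambda>j. {0..<P j}).
      ms k = m \<and> coprime (a + shiftM l k ms) (primorial k) \<and>
      coprime (a + g + shiftM l k ms) (primorial k)}"

end

theory Submission
  imports Defs "HOL-Number_Theory.Cong"
begin

(* Read M = sum_{j=l+1}^{k} m_j P_{j-1}# as a mixed-radix number. Appending a digit x at position
   j+1 adds x P_j#, which leaves a + M and a + g + M unchanged modulo P_1, ..., P_j, while modulo
   P_{j+1} the values a + M + x P_j# with 0 <= x < P_{j+1} run through every residue once. So each
   tuple surviving at level j has exactly P_{j+1} - 2 surviving extensions (P_{j+1} - 1 when
   P_{j+1} divides g), and by induction there are exactly ring_n^g_j survivors at level j.
   Fixing the top digit m_k = m loses only the survivors at level k - 1 for which P_k divides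
   a + M + m P_{k-1}# or a + g + M + m P_{k-1}#. Under either condition the digit m_{k-1} < P_k
   is determined by the lower digits, as P_k does not divide P_{k-2}#, so each condition removes
   at most ring_n^g_{k-2} tuples. The bound thus holds for every k > l + 2, and of the
   hypotheses on (a, a + g) only their coprimality to P_l# is used. *)

section \<open>Primes and primorials\<close>

lemma P_prime: "prime (P i)"
  unfolding P_def using enumerate_in_set primes_infinite by blast

lemma P_less: "1 \<le> i \<Longrightarrow> i < j \<Longrightarrow> P i < P j"
  unfolding P_def using enumerate_mono primes_infinite by (metis diff_less_mono)

lemma P_ge_3: "2 \<le> i \<Longrightarrow> 3 \<le> P i"
  using P_less[of 1 i] prime_ge_2_nat[OF P_prime[of 1]] by simp

lemma primorial_Suc: "primorial (Suc j) = primorial j * P (Suc j)"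
  unfolding primorial_def by (simp add: prod.cl_ivl_Suc)

lemma P_not_dvd_primorial:
  assumes "i < j"
  shows "\<not> P j dvd primorial i"
proof
  assume "P j dvd primorial i"
  then obtain t where "t \<in> {1..i}" "P j dvd P t"
    unfolding primorial_def using prime_dvd_prod_iff[OF _ P_prime] by blast
  then have "P j = P t" and "P t < P j"
    using primes_dvd_imp_eq[OF P_prime P_prime] P_less[of t j] assms by auto
  then show False by simp
qed

lemma coprime_prime_right_iff: "prime (p::nat) \<Longrightarrow> coprime n p \<longleftrightarrow> \<not> p dvd n"
  by (metis coprime_commute coprime_common_divisor dvd_refl not_prime_unit prime_imp_coprime)

lemma coprime_add_mult_left_iff: "coprime (c + x * q) q \<longleftrightarrow> coprime c (q::nat)"
  by (metis add.commute coprime_commute gcd_add_mult coprime_iff_gcd_eq_1)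

lemma coprime_primorial_Suc_iff:
  "coprime (c + x * primorial j) (primorial (Suc j)) \<longleftrightarrow>
     coprime c (primorial j) \<and> \<not> P (Suc j) dvd c + x * primorial j"
  by (simp add: primorial_Suc coprime_add_mult_left_iff coprime_prime_right_iff[OF P_prime])

section \<open>Linear congruences modulo a prime\<close>

lemma inj_on_linear_mod_prime:
  fixes p q d :: nat
  assumes "prime p" "\<not> p dvd q"
  shows "inj_on (\<lambda>x. (d + x * q) mod p) {0..<p}"
proof (rule inj_onI)
  fix x y assume "x \<in> {0..<p}" "y \<in> {0..<p}" "(d + x * q) mod p = (d + y * q) mod p"
  moreover have "coprime q p"
    using assms coprime_prime_right_iff by blast
  ultimately have "[x = y] (mod p)" and "x < p" and "y < p"
    by (simp_all add: cong_def[symmetric] cong_add_lcancel_nat cong_mult_rcancel_nat)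
  then show "x = y"
    by (rule cong_less_modulus_unique_nat)
qed

lemma card_roots_linear_mod_prime:
  fixes p q d :: nat
  assumes "prime p" "\<not> p dvd q"
  shows "card {x \<in> {0..<p}. p dvd d + x * q} = 1"
proof -
  let ?f = "\<lambda>x. (d + x * q) mod p"
  have p: "0 < p"
    using assms(1) by (rule prime_gt_0_nat)
  have inj: "inj_on ?f {0..<p}"
    using assms by (rule inj_on_linear_mod_prime)
  moreover have "?f ` {0..<p} \<subseteq> {0..<p}"
    using p by auto
  ultimately have "?f ` {0..<p} = {0..<p}"
    by (intro endo_inj_surj) simp_all
  then have "0 \<in> ?f ` {0..<p}"
    using p by simp
  then obtain x0 where x0: "0 = ?f x0" "x0 \<in> {0..<p}"
    by (rule imageE)
  have "{x \<in> {0..<p}. p dvd d + x * q} = {x0}"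
  proof (intro equalityI subsetI)
    fix x assume "x \<in> {x \<in> {0..<p}. p dvd d + x * q}"
    then have x: "x \<in> {0..<p}" "?f x = ?f x0"
      using x0(1) by (simp_all add: dvd_eq_mod_eq_0)
    have "x = x0"
      using inj x(2) x(1) x0(2) by (rule inj_onD)
    then show "x \<in> {x0}"
      by simp
  next
    fix x assume "x \<in> {x0}"
    then show "x \<in> {x \<in> {0..<p}. p dvd d + x * q}"
      using x0 by (simp add: dvd_eq_mod_eq_0)
  qed
  then show ?thesis
    by simp
qed

lemma card_avoiding_two_roots:
  fixes p q d g :: nat
  assumes "prime p" "\<not> p dvd q"
  shows "card {x \<in> {0..<p}. \<not> p dvd d + x * q \<and> \<not> p dvd d + g + x * q}
           = (if p dvd g then p - 1 else p - 2)"
proof -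
  let ?R = "\<lambda>c. {x \<in> {0..<p}. p dvd c + x * q}"
  have shift: "d + g + x * q = g + (d + x * q)" for x
    by simp
  have R: "card (?R c) = 1" for c
    using card_roots_linear_mod_prime[OF assms] .
  have "{x \<in> {0..<p}. \<not> p dvd d + x * q \<and> \<not> p dvd d + g + x * q} = {0..<p} - (?R d \<union> ?R (d + g))"
    by auto
  moreover have "card (?R d \<union> ?R (d + g)) = (if p dvd g then 1 else 2)"
  proof (cases "p dvd g")
    case True
    then have "?R (d + g) = ?R d"
      by (simp only: shift dvd_add_right_iff)
    then show ?thesis using R True by simp
  next
    case False
    then have "?R d \<inter> ?R (d + g) = {}"
      by (auto simp: shift dvd_add_left_iff)
    then show ?thesis using R False card_Un_disjoint[of "?R d" "?R (d + g)"] by simp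
  qed
  moreover have "card ({0..<p} - (?R d \<union> ?R (d + g))) = p - card (?R d \<union> ?R (d + g))"
    by (subst card_Diff_subset) auto
  ultimately show ?thesis
    by simp
qed

section \<open>Extending shifts digit by digit\<close>

abbreviation digit_tuples :: "nat \<Rightarrow> nat \<Rightarrow> (nat \<Rightarrow> nat) set" where
  "digit_tuples l j \<equiv> \<Pi>\<^sub>E i\<in>{l+1..j}. {0..<P i}"

definition surviving_shifts :: "nat \<Rightarrow> nat \<Rightarrow> nat \<Rightarrow> nat \<Rightarrow> (nat \<Rightarrow> nat) set" where
  "surviving_shifts l g a j = {ms \<in> digit_tuples l j.
     coprime (a + shiftM l j ms) (primorial j) \<and> coprime (a + g + shiftM l j ms) (primorial j)}"

definition admissible_digits :: "nat \<Rightarrow> nat \<Rightarrow> nat \<Rightarrow> nat \<Rightarrow> (nat \<Rightarrow> nat) \<Rightarrow> nat set" where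
  "admissible_digits l g a j ms = {x \<in> {0..<P (Suc j)}.
     \<not> P (Suc j) dvd a + shiftM l j ms + x * primorial j \<and>
     \<not> P (Suc j) dvd a + g + shiftM l j ms + x * primorial j}"

lemma surviving_shifts_subset: "surviving_shifts l g a j \<subseteq> digit_tuples l j"
  unfolding surviving_shifts_def by blast

lemma finite_surviving_shifts: "finite (surviving_shifts l g a j)"
  using surviving_shifts_subset by (rule finite_subset) (simp add: finite_PiE)

lemma shiftM_upd:
  assumes "l \<le> j"
  shows "shiftM l (Suc j) (ms(Suc j := x)) = shiftM l j ms + x * primorial j"
proof -
  have "shiftM l j (ms(Suc j := x)) = shiftM l j ms"
    unfolding shiftM_def by (rule sum.cong) auto
  then show ?thesis
    using assms unfolding shiftM_def by (simp add: sum.cl_ivl_Suc)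
qed

lemma digit_tuples_Suc:
  assumes "l \<le> j"
  shows "digit_tuples l (Suc j) = (\<lambda>(x, ms). ms(Suc j := x)) ` ({0..<P (Suc j)} \<times> digit_tuples l j)"
proof -
  have "{l+1..Suc j} = insert (Suc j) {l+1..j}"
    using assms by auto
  then show ?thesis
    by (simp add: PiE_insert_eq)
qed

lemma digit_tuples_upd_inject:
  assumes "ms \<in> digit_tuples l j" "ms' \<in> digit_tuples l j"
  shows "ms(Suc j := x) = ms'(Suc j := x') \<longleftrightarrow> ms = ms' \<and> x = x'"
proof
  assume eq: "ms(Suc j := x) = ms'(Suc j := x')"
  have "ms (Suc j) = undefined" "ms' (Suc j) = undefined"
    by (rule PiE_arb[OF assms(1)], simp) (rule PiE_arb[OF assms(2)], simp)
  then have "ms i = ms' i" for i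
    using fun_cong[OF eq, of i] by (cases "i = Suc j") simp_all
  then show "ms = ms' \<and> x = x'"
    using fun_cong[OF eq, of "Suc j"] by auto
qed simp

lemma upd_in_digit_tuples_iff:
  assumes "l \<le> j" "ms \<in> digit_tuples l j"
  shows "ms(Suc j := x) \<in> digit_tuples l (Suc j) \<longleftrightarrow> x < P (Suc j)"
proof
  assume "ms(Suc j := x) \<in> digit_tuples l (Suc j)"
  then have "(ms(Suc j := x)) (Suc j) \<in> {0..<P (Suc j)}"
    by (rule PiE_mem) (simp add: assms(1))
  then show "x < P (Suc j)"
    by simp
next
  assume "x < P (Suc j)"
  then show "ms(Suc j := x) \<in> digit_tuples l (Suc j)"
    unfolding digit_tuples_Suc[OF assms(1)] using assms by (intro rev_image_eqI[of "(x, ms)"]) auto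
qed

lemma upd_in_surviving_shifts_iff:
  assumes "l \<le> j" "ms \<in> digit_tuples l j"
  shows "ms(Suc j := x) \<in> surviving_shifts l g a (Suc j) \<longleftrightarrow>
           ms \<in> surviving_shifts l g a j \<and> x \<in> admissible_digits l g a j ms"
proof -
  have shift: "a + shiftM l (Suc j) (ms(Suc j := x)) = (a + shiftM l j ms) + x * primorial j"
    and shift_g: "a + g + shiftM l (Suc j) (ms(Suc j := x)) = (a + g + shiftM l j ms) + x * primorial j"
    using shiftM_upd[OF assms(1)] by simp_all
  show ?thesis
    unfolding surviving_shifts_def admissible_digits_def mem_Collect_eq shift shift_g
      coprime_primorial_Suc_iff
    using assms(2) upd_in_digit_tuples_iff[OF assms] by auto
qed

lemma upd_in_surviving_shifts:
  assumes "l \<le> j" "ms \<in> surviving_shifts l g a j" "x \<in> admissible_digits l g a j ms"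
  shows "ms(Suc j := x) \<in> surviving_shifts l g a (Suc j)"
  using assms upd_in_surviving_shifts_iff[OF assms(1)] surviving_shifts_subset by blast

lemma surviving_shifts_SucE:
  assumes "l \<le> j" "w \<in> surviving_shifts l g a (Suc j)"
  obtains ms x where "ms \<in> surviving_shifts l g a j" "x \<in> admissible_digits l g a j ms"
    and "w = ms(Suc j := x)"
proof -
  have "w \<in> digit_tuples l (Suc j)"
    using assms(2) surviving_shifts_subset by blast
  then obtain x ms where ms: "ms \<in> digit_tuples l j" and w: "w = ms(Suc j := x)"
    unfolding digit_tuples_Suc[OF assms(1)] by auto
  then have "ms \<in> surviving_shifts l g a j" "x \<in> admissible_digits l g a j ms"
    using assms(2) upd_in_surviving_shifts_iff[OF assms(1) ms] by auto
  then show thesis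
    using w by (rule that)
qed

lemma surviving_shifts_Suc:
  assumes "l \<le> j"
  shows "surviving_shifts l g a (Suc j) =
           (\<lambda>(ms, x). ms(Suc j := x)) ` (SIGMA ms:surviving_shifts l g a j. admissible_digits l g a j ms)"
proof (intro equalityI subsetI)
  fix w assume "w \<in> surviving_shifts l g a (Suc j)"
  then obtain ms x where "ms \<in> surviving_shifts l g a j" "x \<in> admissible_digits l g a j ms"
    and "w = ms(Suc j := x)"
    using assms by (elim surviving_shifts_SucE)
  then show "w \<in> (\<lambda>(ms, x). ms(Suc j := x)) `
                 (SIGMA ms:surviving_shifts l g a j. admissible_digits l g a j ms)"
    by (intro rev_image_eqI[of "(ms, x)"]) auto
next
  fix w assume "w \<in> (\<lambda>(ms, x). ms(Suc j := x)) `
                  (SIGMA ms:surviving_shifts l g a j. admissible_digits l g a j ms)"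
  then obtain ms x where "ms \<in> surviving_shifts l g a j" "x \<in> admissible_digits l g a j ms"
    and "w = ms(Suc j := x)"
    by auto
  then show "w \<in> surviving_shifts l g a (Suc j)"
    using upd_in_surviving_shifts[OF assms] by blast
qed

lemma inj_on_upd_surviving_shifts:
  "inj_on (\<lambda>(ms, x). ms(Suc j := x)) (SIGMA ms:surviving_shifts l g a j. B ms)"
  by (rule inj_onI) (auto simp: surviving_shifts_def digit_tuples_upd_inject)

lemma card_admissible_digits:
  "card (admissible_digits l g a j ms) = (if P (Suc j) dvd g then P (Suc j) - 1 else P (Suc j) - 2)"
  unfolding admissible_digits_def
  using card_avoiding_two_roots[OF P_prime P_not_dvd_primorial[of j "Suc j"], of "a + shiftM l j ms" g]
  by (simp add: ac_simps)

lemma card_surviving_shifts_Suc: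
  assumes "l \<le> j"
  shows "card (surviving_shifts l g a (Suc j)) =
           card (surviving_shifts l g a j) * (if P (Suc j) dvd g then P (Suc j) - 1 else P (Suc j) - 2)"
proof -
  have "card (surviving_shifts l g a (Suc j)) =
          card (SIGMA ms:surviving_shifts l g a j. admissible_digits l g a j ms)"
    unfolding surviving_shifts_Suc[OF assms] by (rule card_image[OF inj_on_upd_surviving_shifts])
  also have "\<dots> = (\<Sum>ms\<in>surviving_shifts l g a j. card (admissible_digits l g a j ms))"
    by (rule card_SigmaI) (auto simp: finite_surviving_shifts admissible_digits_def)
  finally show ?thesis
    by (simp add: card_admissible_digits)
qed

lemma ring_n_self: "ring_n l g l = 1"
proof -
  have no_factors: "{i. l+1 \<le> i \<and> i \<le> l \<and> P i dvd g} = {}"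
    by auto
  show ?thesis
    unfolding ring_n_def no_factors by simp
qed

(* For j = 0 the factor (P 1 - 1) / (P 1 - 2) of ring_n is 1 / 0 = 0 rather than 1; hence 1 <= j. *)
lemma ring_n_Suc:
  assumes "l \<le> j" "1 \<le> j"
  shows "ring_n l g (Suc j) = ring_n l g j * real (if P (Suc j) dvd g then P (Suc j) - 1 else P (Suc j) - 2)"
proof -
  let ?p = "P (Suc j)"
  let ?D = "\<lambda>j. {i. l+1 \<le> i \<and> i \<le> j \<and> P i dvd g}"
  have p: "3 \<le> ?p"
    using P_ge_3 assms by simp
  have A: "(\<Prod>i\<in>{l+1..Suc j}. real (P i) - 2) = (\<Prod>i\<in>{l+1..j}. real (P i) - 2) * (real ?p - 2)"
    using assms by (simp add: prod.cl_ivl_Suc)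
  have fin: "finite (?D j)"
    by (rule finite_subset[of _ "{l+1..j}"]) auto
  show ?thesis
  proof (cases "?p dvd g")
    case True
    then have "?D (Suc j) = insert (Suc j) (?D j)"
      using assms by auto
    then have "(\<Prod>i\<in>?D (Suc j). (real (P i) - 1) / (real (P i) - 2))
        = (real ?p - 1) / (real ?p - 2) * (\<Prod>i\<in>?D j. (real (P i) - 1) / (real (P i) - 2))"
      using fin by simp
    then show ?thesis
      unfolding ring_n_def A using True p by (simp add: of_nat_diff)
  next
    case False
    then have "?D (Suc j) = ?D j"
      by (auto simp: le_Suc_eq)
    then show ?thesis
      unfolding ring_n_def A using False p by (simp add: of_nat_diff mult_ac)
  qed
qed

lemma card_surviving_shifts:
  assumes "1 \<le> l" "l \<le> j" "coprime a (primorial l)" "coprime (a + g) (primorial l)"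
  shows "real (card (surviving_shifts l g a j)) = ring_n l g j"
  using assms(2)
proof (induction j rule: dec_induct)
  case base
  have "surviving_shifts l g a l = {\<lambda>_. undefined}"
    using assms(3,4) unfolding surviving_shifts_def shiftM_def by auto
  then show ?case
    by (simp add: ring_n_self)
next
  case (step j)
  then show ?case
    using assms(1) by (simp add: card_surviving_shifts_Suc ring_n_Suc)
qed

section \<open>Fixing the top digit\<close>

lemma ring_n_S_Suc:
  assumes "l \<le> j"
  shows "ring_n_S l g a (Suc j) m =
           card {ms \<in> surviving_shifts l g a j. m \<in> admissible_digits l g a j ms}"
proof -
  have "ring_n_S l g a (Suc j) m = card {w \<in> surviving_shifts l g a (Suc j). w (Suc j) = m}"
    unfolding ring_n_S_def surviving_shifts_def by (rule arg_cong[where f = card]) auto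
  moreover have "{w \<in> surviving_shifts l g a (Suc j). w (Suc j) = m} =
          (\<lambda>ms. ms(Suc j := m)) ` {ms \<in> surviving_shifts l g a j. m \<in> admissible_digits l g a j ms}"
  proof (intro equalityI subsetI)
    fix w assume w: "w \<in> {w \<in> surviving_shifts l g a (Suc j). w (Suc j) = m}"
    then obtain ms x where "ms \<in> surviving_shifts l g a j" "x \<in> admissible_digits l g a j ms"
      and "w = ms(Suc j := x)"
      using assms by (auto elim: surviving_shifts_SucE)
    with w show "w \<in> (\<lambda>ms. ms(Suc j := m)) `
                  {ms \<in> surviving_shifts l g a j. m \<in> admissible_digits l g a j ms}"
      by auto
  next
    fix w assume "w \<in> (\<lambda>ms. ms(Suc j := m)) `
                    {ms \<in> surviving_shifts l g a j. m \<in> admissible_digits l g a j ms}"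
    then show "w \<in> {w \<in> surviving_shifts l g a (Suc j). w (Suc j) = m}"
      using upd_in_surviving_shifts[OF assms] by auto
  qed
  moreover have "inj_on (\<lambda>ms. ms(Suc j := m)) {ms \<in> surviving_shifts l g a j. m \<in> admissible_digits l g a j ms}"
    by (rule inj_onI) (auto simp: surviving_shifts_def digit_tuples_upd_inject)
  ultimately show ?thesis
    by (simp add: card_image)
qed

lemma card_surviving_shifts_divisible_le:
  assumes "l \<le> i" "prime p" "P (Suc i) \<le> p" "\<not> p dvd primorial i"
  shows "card {ms \<in> surviving_shifts l g a (Suc i). p dvd c + shiftM l (Suc i) ms}
           \<le> card (surviving_shifts l g a i)"
proof -
  let ?R = "\<lambda>ms. {x \<in> {0..<p}. p dvd (c + shiftM l i ms) + x * primorial i}"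
  have "{ms \<in> surviving_shifts l g a (Suc i). p dvd c + shiftM l (Suc i) ms}
          \<subseteq> (\<lambda>(ms, x). ms(Suc i := x)) ` (SIGMA ms:surviving_shifts l g a i. ?R ms)"
    using assms(3) unfolding surviving_shifts_Suc[OF assms(1)]
    by (auto simp: shiftM_upd[OF assms(1)] admissible_digits_def add.assoc image_iff)
  moreover have fin: "finite (SIGMA ms:surviving_shifts l g a i. ?R ms)"
    by (rule finite_SigmaI) (simp_all add: finite_surviving_shifts)
  ultimately have "card {ms \<in> surviving_shifts l g a (Suc i). p dvd c + shiftM l (Suc i) ms}
               \<le> card ((\<lambda>(ms, x). ms(Suc i := x)) ` (SIGMA ms:surviving_shifts l g a i. ?R ms))"
    by (intro card_mono finite_imageI)
  also have "\<dots> \<le> card (SIGMA ms:surviving_shifts l g a i. ?R ms)"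
    using fin by (rule card_image_le)
  also have "\<dots> = (\<Sum>ms\<in>surviving_shifts l g a i. card (?R ms))"
    by (rule card_SigmaI) (auto simp: finite_surviving_shifts)
  also have "\<dots> = card (surviving_shifts l g a i)"
    using card_roots_linear_mod_prime[OF assms(2,4)] by simp
  finally show ?thesis .
qed

lemma card_surviving_shifts_le_ring_n_S:
  assumes "l \<le> i" "m < P (Suc (Suc i))"
  shows "card (surviving_shifts l g a (Suc i))
           \<le> ring_n_S l g a (Suc (Suc i)) m + 2 * card (surviving_shifts l g a i)"
proof -
  let ?G = "surviving_shifts l g a (Suc i)"
  let ?p = "P (Suc (Suc i))"
  let ?Q = "primorial (Suc i)"
  let ?A = "{ms \<in> ?G. m \<in> admissible_digits l g a (Suc i) ms}"
  let ?B = "\<lambda>c. {ms \<in> ?G. ?p dvd c + shiftM l (Suc i) ms}"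
  have B: "card (?B c) \<le> card (surviving_shifts l g a i)" for c
    using P_less[of "Suc i" "Suc (Suc i)"] P_not_dvd_primorial[of i "Suc (Suc i)"]
    by (intro card_surviving_shifts_divisible_le[OF assms(1) P_prime]) auto
  have reorder: "a + shiftM l (Suc i) ms + m * ?Q = (a + m * ?Q) + shiftM l (Suc i) ms"
    "a + g + shiftM l (Suc i) ms + m * ?Q = (a + g + m * ?Q) + shiftM l (Suc i) ms" for ms
    by simp_all
  have "?G \<subseteq> ?A \<union> ?B (a + m * ?Q) \<union> ?B (a + g + m * ?Q)"
    using assms(2) by (auto simp: admissible_digits_def reorder)
  then have "card ?G \<le> card (?A \<union> ?B (a + m * ?Q) \<union> ?B (a + g + m * ?Q))"
    by (intro card_mono) (auto simp: finite_surviving_shifts)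
  also have "\<dots> \<le> card ?A + card (?B (a + m * ?Q)) + card (?B (a + g + m * ?Q))"
    by (meson card_Un_le add_right_mono order_trans)
  also have "\<dots> \<le> ring_n_S l g a (Suc (Suc i)) m + 2 * card (surviving_shifts l g a i)"
    using B[of "a + m * ?Q"] B[of "a + g + m * ?Q"] ring_n_S_Suc[of l "Suc i"] assms(1) by simp
  finally show ?thesis .
qed

lemma ring_n_S_lower_bound:
  assumes "1 \<le> l" "coprime a (primorial l)" "coprime (a + g) (primorial l)"
    and "l + 2 < k" "m < P k"
  shows "ring_n l g (k - 1) - 2 * ring_n l g (k - 2) \<le> real (ring_n_S l g a k m)"
proof -
  define i where "i = k - 2"
  have k: "k = Suc (Suc i)" and "l \<le> i"
    using assms(4) unfolding i_def by arith+
  have "card (surviving_shifts l g a (Suc i))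
          \<le> ring_n_S l g a k m + 2 * card (surviving_shifts l g a i)"
    unfolding k using \<open>l \<le> i\<close> assms(5) k by (intro card_surviving_shifts_le_ring_n_S) simp_all
  then have "real (card (surviving_shifts l g a (Suc i)))
               \<le> real (ring_n_S l g a k m) + 2 * real (card (surviving_shifts l g a i))"
    by (metis of_nat_add of_nat_mono of_nat_mult of_nat_numeral)
  moreover have "real (card (surviving_shifts l g a (Suc i))) = ring_n l g (k - 1)"
    and "real (card (surviving_shifts l g a i)) = ring_n l g (k - 2)"
    using card_surviving_shifts[OF assms(1) _ assms(2,3)] \<open>l \<le> i\<close> k by simp_all
  ultimately show ?thesis
    by linarith
qed

theorem corollary1:
  fixes g l a :: nat
  assumes "g > 0" and "l \<ge> 1" and "cpp_pair l g a"
  shows "\<exists>N. \<forall>k m. k > l + 2 \<and> P k \<ge> N \<and> m \<le> P k - 1 \<longrightarrow>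
           real (ring_n_S l g a k m) \<ge> ring_n l g (k - 1) - 2 * ring_n l g (k - 2)"
proof (intro exI[of _ 0] allI impI)
  fix k m assume km: "k > l + 2 \<and> P k \<ge> 0 \<and> m \<le> P k - 1"
  have "coprime a (primorial l)" "coprime (a + g) (primorial l)"
    using assms(3) unfolding cpp_pair_def consecutive_pp_def prospective_prime_def by auto
  moreover have "m < P k"
    using km prime_ge_2_nat[OF P_prime[of k]] by linarith
  ultimately show "real (ring_n_S l g a k m) \<ge> ring_n l g (k - 1) - 2 * ring_n l g (k - 2)"
    using ring_n_S_lower_bound[OF assms(2)] km by blast
qed

end
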